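(* Let $G$ be a finite simple graph with edge weight function $w$, and let $w_1(u)=0$ for all $u\in V(G)$. If the maximum degree $\Delta$ of $G$ is greater than $1$, then all roots of $\eta_{(w,w_1)}(G,x)$ lie in the interval $[-2b_0\sqrt{\Delta-1},\,2b_0\sqrt{\Delta-1}]$, where $b_0=\max_{e\in E(G)}|w(e)|$.
   Context: An edge weight function $w$ assigns a nonzero complex number to each edge; induced subgraphs carry restricted weights. For $A\subseteq E(G)$, $w(A)=\prod_{e\in A}w(e)$. $\mu_w(G,x)=\sum_{M}(-1)^{|M|}|w(M)|^2x^{n-2|M|}$ over all matchings $M$ (including empty), $n=|V(G)|$. $\eta_{(w,w_1)}(G,x)=\sum_{S\subseteq V(G)}(-1)^{|V(G)\setminus S|}\big(\prod_{v\in V(G)\setminus S}w_1(v)\big)\mu_w(G[S],x)$ with $G[S]$ the induced subgraph and $\mu_w$ of the empty graph equal to $1$. *)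

theory Defs
  imports Complex_Main
begin

definition simple_graph :: "'a set \<Rightarrow> 'a set set \<Rightarrow> bool" where
  "simple_graph V E \<longleftrightarrow> finite V \<and> (\<forall>e\<in>E. e \<subseteq> V \<and> card e = 2)"

definition matchings :: "'a set set \<Rightarrow> 'a set set set" where
  "matchings E = {M. M \<subseteq> E \<and> (\<forall>e\<in>M. \<forall>f\<in>M. e \<noteq> f \<longrightarrow> e \<inter> f = {})}"

definition induced_edges :: "'a set set \<Rightarrow> 'a set \<Rightarrow> 'a set set" where
  "induced_edges E S = {e\<in>E. e \<subseteq> S}"

definition mu_w :: "'a set \<Rightarrow> 'a set set \<Rightarrow> ('a set \<Rightarrow> complex) \<Rightarrow> complex \<Rightarrow> complex" where
  "mu_w V E w x = (\<Sum>M\<in>matchings E. (-1) ^ card M * complex_of_real ((\<Prod>e\<in>M. cmod (w e)) ^ 2)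
                      * x ^ (card V - 2 * card M))"

definition eta :: "'a set \<Rightarrow> 'a set set \<Rightarrow> ('a set \<Rightarrow> complex) \<Rightarrow> ('a \<Rightarrow> complex) \<Rightarrow> complex \<Rightarrow> complex" where
  "eta V E w w1 x = (\<Sum>S\<in>Pow V. (-1) ^ card (V - S) * (\<Prod>v\<in>V - S. w1 v)
                      * mu_w S (induced_edges E S) w x)"

definition degree :: "'a set set \<Rightarrow> 'a \<Rightarrow> nat" where
  "degree E v = card {e\<in>E. v \<in> e}"

definition max_degree :: "'a set \<Rightarrow> 'a set set \<Rightarrow> nat" where
  "max_degree V E = Max (degree E ` V)"

end

theory Submission
  imports Defs
begin

text \<open>
  Since \<open>w\<^sub>1 = 0\<close>, every term of \<open>\<eta>\<close> with \<open>S \<noteq> V\<close> vanishes and \<open>\<eta>\<close> is the matching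
  polynomial \<open>\<mu>\<close> of \<open>G\<close> with the nonnegative edge weights \<open>|w(e)|\<^sup>2\<close>. Deleting a vertex \<open>u\<close>
  gives the recurrence \<open>\<mu>(G) = x \<mu>(G - u) - \<Sum>\<^sub>u\<^sub>v |w(uv)|\<^sup>2 \<mu>(G - u - v)\<close>. Following
  Heilmann and Lieb, induction on this recurrence shows that \<open>\<mu>(G)/\<mu>(G - u)\<close> maps the
  upper half plane into itself, so \<open>\<mu>\<close> has only real roots. Following Godsil, for real
  \<open>t > 2 b\<^sub>0 \<surd>(\<Delta> - 1)\<close> the same recurrence shows by induction that \<open>\<mu>(G, t) > 0\<close> and that
  \<open>\<mu>(G, t) > b\<^sub>0 \<surd>(\<Delta> - 1) \<mu>(G - u, t)\<close> whenever \<open>u\<close> has degree less than \<open>\<Delta>\<close>; as \<open>\<mu>\<close> is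
  even or odd, negative roots are bounded as well.
\<close>

text \<open>
  It is evaluated in any real field, so that both real and complex
  arguments are available.
\<close>

definition matching_poly :: "'a set set \<Rightarrow> ('a set \<Rightarrow> real) \<Rightarrow> 'a set \<Rightarrow> 'b::real_field \<Rightarrow> 'b" where
  "matching_poly E q S x = (\<Sum>M\<in>matchings (induced_edges E S).
      (-1) ^ card M * of_real (\<Prod>e\<in>M. q e) * x ^ (card S - 2 * card M))"

lemma simple_graph_finite_edges: "simple_graph V E \<Longrightarrow> finite E"
  unfolding simple_graph_def by (meson Pow_iff finite_Pow_iff finite_subset subsetI)

lemma finite_induced_edges: "finite S \<Longrightarrow> finite (induced_edges E S)"
  by (rule finite_subset[of _ "Pow S"]) (auto simp: induced_edges_def)

lemma finite_matchings_induced: "finite S \<Longrightarrow> finite (matchings (induced_edges E S))"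
  by (rule finite_subset[of _ "Pow (induced_edges E S)"])
     (auto simp: matchings_def finite_induced_edges)

lemma card_matching_le:
  assumes "simple_graph V E" "finite S" "M \<in> matchings (induced_edges E S)"
  shows "2 * card M \<le> card S"
proof -
  have M: "M \<subseteq> induced_edges E S" "pairwise disjnt M"
    using assms(3) by (auto simp: matchings_def pairwise_def disjnt_def)
  have card2: "card e = 2" if "e \<in> M" for e
    using that M(1) assms(1) by (auto simp: simple_graph_def induced_edges_def)
  have "2 * card M = sum card M" using card2 by simp
  also have "\<dots> = card (\<Union>M)"
    using card2 by (intro card_Union_disjoint[symmetric, OF M(2)]) (simp add: card_ge_0_finite)
  also have "\<dots> \<le> card S"
    using M(1) assms(2) by (intro card_mono) (auto simp: induced_edges_def)
  finally show ?thesis .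
qed

lemma matching_poly_empty: "simple_graph V E \<Longrightarrow> matching_poly E q {} x = 1"
proof -
  assume "simple_graph V E"
  then have "matchings (induced_edges E {}) = {{}}"
    by (force simp: simple_graph_def induced_edges_def matchings_def)
  then show ?thesis by (simp add: matching_poly_def)
qed

lemma matching_poly_of_real: "matching_poly E q S (of_real t) = of_real (matching_poly E q S t)"
  by (simp add: matching_poly_def)

lemma matching_poly_cnj: "matching_poly E q S (cnj z) = cnj (matching_poly E q S z)"
  by (simp add: matching_poly_def)

lemma matching_poly_uminus:
  assumes "simple_graph V E" "finite S"
  shows "matching_poly E q S (- x) = (-1) ^ card S * matching_poly E q S x"
  unfolding matching_poly_def sum_distrib_left
proof (rule sum.cong[OF refl])
  fix M assume "M \<in> matchings (induced_edges E S)"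
  then obtain k where k: "card S = 2 * card M + k"
    using card_matching_le[OF assms] le_Suc_ex by blast
  then have "(-1) ^ (card S - 2 * card M) = ((-1) ^ card S :: 'b)"
    by (simp add: power_add power_mult)
  then have "(- x) ^ (card S - 2 * card M) = (-1) ^ card S * x ^ (card S - 2 * card M)"
    by (subst power_minus) simp
  then show "(-1) ^ card M * of_real (\<Prod>e\<in>M. q e) * (- x) ^ (card S - 2 * card M)
      = (-1) ^ card S * ((-1) ^ card M * of_real (\<Prod>e\<in>M. q e) * x ^ (card S - 2 * card M))"
    by (simp add: mult_ac)
qed

lemma eta_eq_matching_poly:
  assumes "simple_graph V E" "\<forall>u\<in>V. w1 u = 0"
  shows "eta V E w w1 x = matching_poly E (\<lambda>e. (cmod (w e))\<^sup>2) V x"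
proof -
  have fin: "finite V" using assms(1) by (simp add: simple_graph_def)
  have "eta V E w w1 x = mu_w V (induced_edges E V) w x"
    unfolding eta_def using fin assms(2)
    by (subst sum.mono_neutral_right[of "Pow V" "{V}"]) (auto simp: prod_zero_iff)
  then show ?thesis by (simp add: mu_w_def matching_poly_def prod_power_distrib)
qed

lemma matchings_avoiding_vertex:
  "{M \<in> matchings (induced_edges E S). \<forall>e\<in>M. u \<notin> e} = matchings (induced_edges E (S - {u}))"
  by (auto simp: matchings_def induced_edges_def)

lemma matchings_covering_vertex:
  "bij_betw (\<lambda>(e, M). insert e M)
     (SIGMA e:{e \<in> induced_edges E S. u \<in> e}. matchings (induced_edges E (S - e)))
     {M \<in> matchings (induced_edges E S). \<exists>e\<in>M. u \<in> e}"
proof (rule bij_betw_imageI)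
  have avoid: "u \<notin> f" "f \<inter> e = {}" "f \<subseteq> S"
    if "M \<in> matchings (induced_edges E (S - e))" "f \<in> M" "u \<in> e" for e f M
    using that by (auto simp: matchings_def induced_edges_def)
  show "inj_on (\<lambda>(e, M). insert e M)
      (SIGMA e:{e \<in> induced_edges E S. u \<in> e}. matchings (induced_edges E (S - e)))"
  proof (rule inj_onI, clarsimp)
    fix e1 M1 e2 M2
    assume e: "u \<in> e1" "u \<in> e2"
      and M: "M1 \<in> matchings (induced_edges E (S - e1))" "M2 \<in> matchings (induced_edges E (S - e2))"
      and eq: "insert e1 M1 = insert e2 M2"
    have "e1 \<notin> M2" "e2 \<notin> M1" "e1 \<notin> M1" "e2 \<notin> M2"
      using avoid(1)[OF M(1) _ e(1)] avoid(1)[OF M(2) _ e(2)] e by blast+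
    with eq show "e1 = e2 \<and> M1 = M2" by (metis insertI1 insert_ident insert_iff)
  qed
  show "(\<lambda>(e, M). insert e M) `
      (SIGMA e:{e \<in> induced_edges E S. u \<in> e}. matchings (induced_edges E (S - e)))
      = {M \<in> matchings (induced_edges E S). \<exists>e\<in>M. u \<in> e}"
  proof (intro equalityI subsetI)
    fix N assume "N \<in> (\<lambda>(e, M). insert e M) `
      (SIGMA e:{e \<in> induced_edges E S. u \<in> e}. matchings (induced_edges E (S - e)))"
    then obtain e M where e: "e \<in> induced_edges E S" "u \<in> e"
      and M: "M \<in> matchings (induced_edges E (S - e))" and N: "N = insert e M" by auto
    have "f \<in> induced_edges E S" "f \<inter> e = {}" if "f \<in> M" for f
      using avoid[OF M that e(2)] M that by (auto simp: matchings_def induced_edges_def)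
    with e M show "N \<in> {M \<in> matchings (induced_edges E S). \<exists>e\<in>M. u \<in> e}"
      unfolding N by (auto simp: matchings_def)
  next
    fix N assume N: "N \<in> {M \<in> matchings (induced_edges E S). \<exists>e\<in>M. u \<in> e}"
    then obtain e where e: "e \<in> N" "u \<in> e" by auto
    have "f \<in> E" "f \<subseteq> S" "f \<inter> e = {}" if "f \<in> N - {e}" for f
      using N e(1) that unfolding matchings_def induced_edges_def by auto
    then have "N - {e} \<subseteq> induced_edges E (S - e)"
      unfolding induced_edges_def by blast
    then have "N - {e} \<in> matchings (induced_edges E (S - e))"
      using N by (simp add: matchings_def)
    moreover have "e \<in> induced_edges E S" using N e(1) by (auto simp: matchings_def)
    ultimately show "N \<in> (\<lambda>(e, M). insert e M) `
      (SIGMA e:{e \<in> induced_edges E S. u \<in> e}. matchings (induced_edges E (S - e)))"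
      using e by (intro image_eqI[where x = "(e, N - {e})"]) (simp_all add: insert_absorb)
  qed
qed

lemma matching_poly_delete_vertex:
  assumes "simple_graph V E" "finite S" "u \<in> S"
  shows "matching_poly E q S x = x * matching_poly E q (S - {u}) x
           - (\<Sum>e\<in>{e \<in> induced_edges E S. u \<in> e}. of_real (q e) * matching_poly E q (S - e) x)"
proof -
  define summand where
    "summand T M = (-1) ^ card M * of_real (\<Prod>e\<in>M. q e) * x ^ (card T - 2 * card M)"
    for T :: "'a set" and M :: "'a set set"
  define Eu where "Eu = {e \<in> induced_edges E S. u \<in> e}"
  define avoiding where "avoiding = {M \<in> matchings (induced_edges E S). \<forall>e\<in>M. u \<notin> e}"
  define covering where "covering = {M \<in> matchings (induced_edges E S). \<exists>e\<in>M. u \<in> e}"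
  have poly: "matching_poly E q T x = (\<Sum>M\<in>matchings (induced_edges E T). summand T M)" for T
    by (simp add: matching_poly_def summand_def)
  have "(\<Sum>M\<in>avoiding. summand S M) = x * matching_poly E q (S - {u}) x"
    unfolding avoiding_def matchings_avoiding_vertex poly sum_distrib_left
  proof (rule sum.cong[OF refl])
    fix M assume "M \<in> matchings (induced_edges E (S - {u}))"
    then have "2 * card M \<le> card (S - {u})" using assms(1,2) by (simp add: card_matching_le)
    then have "card S - 2 * card M = Suc (card (S - {u}) - 2 * card M)"
      using assms(2,3) card_gt_0_iff[of S] by auto
    then show "summand S M = x * summand (S - {u}) M" by (simp add: summand_def mult_ac)
  qed
  moreover have "(\<Sum>M\<in>covering. summand S M)
      = - (\<Sum>e\<in>Eu. of_real (q e) * matching_poly E q (S - e) x)"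
  proof -
    have "(\<Sum>M\<in>covering. summand S M)
        = (\<Sum>e\<in>Eu. \<Sum>M\<in>matchings (induced_edges E (S - e)). summand S (insert e M))"
      unfolding covering_def Eu_def
      using assms(2) matchings_covering_vertex[of E S u]
      by (simp add: sum.reindex_bij_betw[symmetric] sum.Sigma finite_induced_edges
          finite_matchings_induced split_def)
    also have "\<dots> = (\<Sum>e\<in>Eu. \<Sum>M\<in>matchings (induced_edges E (S - e)).
                        - (of_real (q e) * summand (S - e) M))"
    proof (intro sum.cong refl)
      fix e M assume e: "e \<in> Eu" and M: "M \<in> matchings (induced_edges E (S - e))"
      have "card e = 2" "e \<subseteq> S" "u \<in> e"
        using e assms(1) by (auto simp: Eu_def induced_edges_def simple_graph_def)
      then have card_Se: "card (S - e) = card S - 2"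
        using assms(2) by (simp add: card_Diff_subset finite_subset)
      have "M \<subseteq> induced_edges E (S - e)" using M by (simp add: matchings_def)
      then have "finite M" using assms(2) finite_induced_edges finite_subset by blast
      moreover have "e \<notin> M" using M \<open>u \<in> e\<close> by (auto simp: matchings_def induced_edges_def)
      ultimately show "summand S (insert e M) = - (of_real (q e) * summand (S - e) M)"
        by (simp add: summand_def card_Se mult_ac diff_mult_distrib2)
    qed
    finally show ?thesis
      by (simp add: poly sum_distrib_left sum_negf)
  qed
  moreover have "matching_poly E q S x = (\<Sum>M\<in>avoiding. summand S M) + (\<Sum>M\<in>covering. summand S M)"
  proof -
    have "matchings (induced_edges E S) = avoiding \<union> covering" "avoiding \<inter> covering = {}"
      by (auto simp: avoiding_def covering_def)
    moreover have "finite avoiding" "finite covering"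
      using assms(2) by (simp_all add: avoiding_def covering_def finite_matchings_induced)
    ultimately show ?thesis by (simp add: poly sum.union_disjoint)
  qed
  ultimately show ?thesis by (simp add: Eu_def)
qed

lemma induced_edge_at_vertexE:
  assumes "simple_graph V E" "e \<in> induced_edges E S" "u \<in> e"
  obtains v where "v \<in> S - {u}" "e = {u, v}"
proof -
  have "card e = 2" "e \<subseteq> S" using assms by (auto simp: simple_graph_def induced_edges_def)
  then obtain a b where "e = {a, b}" "a \<noteq> b" by (meson card_2_iff)
  with assms(3) \<open>e \<subseteq> S\<close> show thesis using that by fastforce
qed

lemma degree_induced_le:
  assumes "simple_graph V E"
  shows "degree (induced_edges E S) u \<le> degree E u"
  unfolding degree_def induced_edges_def using simple_graph_finite_edges[OF assms]
  by (intro card_mono) auto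

lemma degree_delete_neighbour:
  assumes "finite S" "{u, v} \<in> induced_edges E S" "u \<noteq> v"
  shows "degree (induced_edges E (S - {u})) v < degree (induced_edges E S) v"
  unfolding degree_def
proof (rule psubset_card_mono)
  show "finite {f \<in> induced_edges E S. v \<in> f}" using assms(1) by (simp add: finite_induced_edges)
  have "{f \<in> induced_edges E (S - {u}). v \<in> f} \<subseteq> {f \<in> induced_edges E S. v \<in> f}"
    by (auto simp: induced_edges_def)
  moreover have "{u, v} \<notin> induced_edges E (S - {u})" by (simp add: induced_edges_def)
  ultimately show "{f \<in> induced_edges E (S - {u}). v \<in> f} \<subset> {f \<in> induced_edges E S. v \<in> f}"
    using assms(2) by blast
qed

lemma Im_divide_swap_neg:
  fixes a b :: complex
  assumes "Im (b / a) > 0"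
  shows "Im (a / b) < 0"
proof -
  have "(Re (b / a))\<^sup>2 + (Im (b / a))\<^sup>2 > 0" using assms by (simp add: add_nonneg_pos)
  moreover have "a / b = inverse (b / a)" by simp
  ultimately show ?thesis using assms by (simp only: inverse_complex.sel divide_neg_pos neg_less_0_iff_less)
qed

lemma Im_matching_poly_ratio:
  fixes z :: complex
  assumes "simple_graph V E" "finite S" "u \<in> S" "matching_poly E q (S - {u}) z \<noteq> 0"
  shows "Im (matching_poly E q S z / matching_poly E q (S - {u}) z) = Im z
           - (\<Sum>e\<in>{e \<in> induced_edges E S. u \<in> e}.
                q e * Im (matching_poly E q (S - e) z / matching_poly E q (S - {u}) z))"
proof -
  have Im_scale: "Im (of_real r * w / m) = r * Im (w / m)" for r and w m :: complex
    by (simp add: Im_divide algebra_simps)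
  show ?thesis using assms(4)
    by (simp add: matching_poly_delete_vertex[OF assms(1-3)] diff_divide_distrib sum_divide_distrib Im_scale)
qed

lemma matching_poly_upper_half_plane:
  fixes z :: complex
  assumes sg: "simple_graph V E" and q: "\<forall>e\<in>E. q e \<ge> 0" and z: "Im z > 0"
  shows "S \<subseteq> V \<Longrightarrow> matching_poly E q S z \<noteq> 0 \<and>
           (\<forall>u\<in>S. Im (matching_poly E q S z / matching_poly E q (S - {u}) z) > 0)"
proof (induction "card S" arbitrary: S rule: less_induct)
  case less
  have fin: "finite S" using less.prems sg by (auto simp: simple_graph_def intro: finite_subset)
  have IH: "matching_poly E q (S - {u}) z \<noteq> 0 \<and> (\<forall>v\<in>S - {u}.
      Im (matching_poly E q (S - {u}) z / matching_poly E q (S - {u} - {v}) z) > 0)" if "u \<in> S" for u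
    using less.hyps[OF card_Diff1_less[OF fin that]] less.prems by blast
  have ratio: "Im (matching_poly E q S z / matching_poly E q (S - {u}) z) > 0" if u: "u \<in> S" for u
  proof -
    have "Im (matching_poly E q (S - e) z / matching_poly E q (S - {u}) z) \<le> 0"
      if e: "e \<in> induced_edges E S" "u \<in> e" for e
    proof -
      obtain v where v: "v \<in> S - {u}" "e = {u, v}" using induced_edge_at_vertexE[OF sg e] .
      then have "S - e = S - {u} - {v}" by auto
      then show ?thesis using IH[OF u] v(1) Im_divide_swap_neg by (metis less_imp_le)
    qed
    then have "(\<Sum>e\<in>{e \<in> induced_edges E S. u \<in> e}.
        q e * Im (matching_poly E q (S - e) z / matching_poly E q (S - {u}) z)) \<le> 0"
      using q by (intro sum_nonpos) (simp add: induced_edges_def mult_nonneg_nonpos)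
    then show ?thesis using z by (simp add: Im_matching_poly_ratio[OF sg fin u] IH[OF u])
  qed
  have "matching_poly E q S z \<noteq> 0"
  proof (cases "S = {}")
    case True
    then show ?thesis by (simp add: matching_poly_empty[OF sg])
  next
    case False
    then obtain u where "u \<in> S" by blast
    then show ?thesis using ratio by fastforce
  qed
  with ratio show ?case by blast
qed

lemma matching_poly_root_real:
  fixes z :: complex
  assumes "simple_graph V E" "\<forall>e\<in>E. q e \<ge> 0" "S \<subseteq> V" "matching_poly E q S z = 0"
  shows "z \<in> \<real>"
proof (rule ccontr)
  assume "z \<notin> \<real>"
  then have "Im z > 0 \<or> Im (cnj z) > 0" by (auto simp: complex_is_Real_iff)
  moreover have "matching_poly E q S (cnj z) = 0" using assms(4) by (simp add: matching_poly_cnj)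
  ultimately show False
    using matching_poly_upper_half_plane[OF assms(1,2) _ assms(3)] assms(4) by blast
qed

lemma matching_poly_ge_by_neighbours:
  fixes t c :: real
  assumes "simple_graph V E" "finite S" "u \<in> S"
    and nb: "\<And>e. e \<in> induced_edges E S \<Longrightarrow> u \<in> e \<Longrightarrow>
               q e * matching_poly E q (S - e) t \<le> c * matching_poly E q (S - {u}) t"
  shows "(t - real (degree (induced_edges E S) u) * c) * matching_poly E q (S - {u}) t
           \<le> matching_poly E q S t"
proof -
  have "(\<Sum>e\<in>{e \<in> induced_edges E S. u \<in> e}. q e * matching_poly E q (S - e) t)
      \<le> (\<Sum>e\<in>{e \<in> induced_edges E S. u \<in> e}. c * matching_poly E q (S - {u}) t)"
    using nb by (intro sum_mono) simp
  then show ?thesis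
    by (simp add: matching_poly_delete_vertex[OF assms(1-3)] degree_def algebra_simps)
qed

lemma matching_poly_neighbour_term_le:
  fixes t s c :: real
  assumes sg: "simple_graph V E" and deg: "\<forall>v\<in>V. degree E v \<le> D" and "S \<subseteq> V"
    and e: "e \<in> induced_edges E S" "u \<in> e" and "q e \<le> c * s" "c > 0"
    and IH: "\<And>T. T \<subset> S \<Longrightarrow> matching_poly E q T t > 0 \<and>
               (\<forall>v\<in>T. degree (induced_edges E T) v < D \<longrightarrow>
                  matching_poly E q T t > s * matching_poly E q (T - {v}) t)"
  shows "q e * matching_poly E q (S - e) t \<le> c * matching_poly E q (S - {u}) t"
proof -
  have fin: "finite S" using sg \<open>S \<subseteq> V\<close> by (auto simp: simple_graph_def intro: finite_subset)
  obtain v where v: "v \<in> S - {u}" "e = {u, v}" using induced_edge_at_vertexE[OF sg e] .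
  have "degree (induced_edges E (S - {u})) v < degree (induced_edges E S) v"
    using degree_delete_neighbour[OF fin] e v by auto
  also have "\<dots> \<le> D" using degree_induced_le[OF sg, of S v] deg v \<open>S \<subseteq> V\<close> by force
  finally have deg_v: "degree (induced_edges E (S - {u})) v < D" .
  have "u \<in> S" using e by (auto simp: induced_edges_def)
  then have "S - {u} \<subset> S" "S - e = S - {u} - {v}" using v by auto
  then have m0_gt: "matching_poly E q (S - {u}) t > s * matching_poly E q (S - e) t"
    using IH[of "S - {u}"] v(1) deg_v by simp
  have "S - e \<subset> S" using \<open>u \<in> S\<close> e(2) by auto
  then have "matching_poly E q (S - e) t > 0" using IH by blast
  then have "q e * matching_poly E q (S - e) t \<le> c * s * matching_poly E q (S - e) t"
    using \<open>q e \<le> c * s\<close> by (intro mult_right_mono) auto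
  also have "\<dots> \<le> c * matching_poly E q (S - {u}) t"
    unfolding mult.assoc using m0_gt \<open>c > 0\<close> by (intro mult_left_mono) auto
  finally show ?thesis .
qed

text \<open>
  Godsil's argument: by induction every neighbour term of the recurrence is at most
  \<open>c \<mu>(S - u)\<close>, so a vertex of degree below \<open>D\<close> gains a factor \<open>t - (D - 1) c = t - s > s\<close>
  and any vertex a factor \<open>t - D c \<ge> t - 2 s > 0\<close>.
\<close>

lemma matching_poly_pos_beyond_bound:
  fixes t s c :: real
  assumes sg: "simple_graph V E" and deg: "\<forall>v\<in>V. degree E v \<le> D" and "D \<ge> 2"
    and q: "\<forall>e\<in>E. q e \<le> c * s" and c_pos: "c > 0" and s_eq: "(real D - 1) * c = s"
    and t: "t > 2 * s"
  shows "S \<subseteq> V \<Longrightarrow> matching_poly E q S t > 0 \<and>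
           (\<forall>u\<in>S. degree (induced_edges E S) u < D \<longrightarrow>
              matching_poly E q S t > s * matching_poly E q (S - {u}) t)"
proof (induction "card S" arbitrary: S rule: less_induct)
  case less
  have fin: "finite S" using less.prems sg by (auto simp: simple_graph_def intro: finite_subset)
  have IH: "matching_poly E q T t > 0 \<and> (\<forall>v\<in>T. degree (induced_edges E T) v < D \<longrightarrow>
      matching_poly E q T t > s * matching_poly E q (T - {v}) t)" if "T \<subset> S" for T
    using less.hyps[OF psubset_card_mono[OF fin that]] less.prems that by blast
  have step: "matching_poly E q (S - {u}) t > 0 \<and>
      (t - real (degree (induced_edges E S) u) * c) * matching_poly E q (S - {u}) t
        \<le> matching_poly E q S t" if u: "u \<in> S" for u
  proof
    show "matching_poly E q (S - {u}) t > 0" using IH u by blast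
    show "(t - real (degree (induced_edges E S) u) * c) * matching_poly E q (S - {u}) t
        \<le> matching_poly E q S t"
    proof (rule matching_poly_ge_by_neighbours[OF sg fin u])
      fix e assume e: "e \<in> induced_edges E S" "u \<in> e"
      then have "q e \<le> c * s" using q by (simp add: induced_edges_def)
      then show "q e * matching_poly E q (S - e) t \<le> c * matching_poly E q (S - {u}) t"
        by (rule matching_poly_neighbour_term_le[OF sg deg less.prems e _ c_pos IH])
    qed
  qed
  have ratio: "matching_poly E q S t > s * matching_poly E q (S - {u}) t"
    if "u \<in> S" "degree (induced_edges E S) u < D" for u
  proof -
    have "real (degree (induced_edges E S) u) * c \<le> (real D - 1) * c"
      using that(2) c_pos by (intro mult_right_mono) auto
    then have "t - s \<le> t - real (degree (induced_edges E S) u) * c" using s_eq by linarith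
    then have "(t - s) * matching_poly E q (S - {u}) t
        \<le> (t - real (degree (induced_edges E S) u) * c) * matching_poly E q (S - {u}) t"
      using step[OF that(1)] by (intro mult_right_mono) auto
    moreover have "s * matching_poly E q (S - {u}) t < (t - s) * matching_poly E q (S - {u}) t"
      using step[OF that(1)] t by (intro mult_strict_right_mono) auto
    ultimately show ?thesis using step[OF that(1)] by linarith
  qed
  have "matching_poly E q S t > 0"
  proof (cases "S = {}")
    case True
    then show ?thesis by (simp add: matching_poly_empty[OF sg])
  next
    case False
    then obtain u where u: "u \<in> S" by blast
    have "degree (induced_edges E S) u \<le> D"
      using degree_induced_le[OF sg, of S u] deg u less.prems by force
    then have "real (degree (induced_edges E S) u) * c \<le> real D * c"
      using c_pos by (intro mult_right_mono) auto
    moreover have "c \<le> s" using \<open>D \<ge> 2\<close> c_pos s_eq[symmetric] by simp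
    ultimately have "t - real (degree (induced_edges E S) u) * c > 0"
      using s_eq t by (simp add: algebra_simps)
    then have "(t - real (degree (induced_edges E S) u) * c) * matching_poly E q (S - {u}) t > 0"
      using step[OF u] by simp
    then show ?thesis using step[OF u] by linarith
  qed
  with ratio show ?case by blast
qed

lemma matching_poly_real_root_bound:
  fixes t b :: real
  assumes sg: "simple_graph V E" and deg: "\<forall>v\<in>V. degree E v \<le> D" and "D \<ge> 2"
    and q: "\<forall>e\<in>E. q e \<le> b\<^sup>2" and "b > 0" and root: "matching_poly E q V t = 0"
  shows "\<bar>t\<bar> \<le> 2 * b * sqrt (real D - 1)"
proof (rule ccontr)
  define s where "s = b * sqrt (real D - 1)"
  define c where "c = b / sqrt (real D - 1)"
  have r: "sqrt (real D - 1) * sqrt (real D - 1) = real D - 1" "sqrt (real D - 1) > 0"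
    using \<open>D \<ge> 2\<close> by simp_all
  have "c > 0" using \<open>b > 0\<close> r(2) by (simp add: c_def)
  have "\<forall>e\<in>E. q e \<le> c * s" using q r(2) by (simp add: s_def c_def power2_eq_square)
  have "(real D - 1) * c = sqrt (real D - 1) * (sqrt (real D - 1) * (b / sqrt (real D - 1)))"
    by (simp only: c_def mult.assoc[symmetric] r(1))
  also have "\<dots> = s" using r(2) by (simp add: s_def)
  finally have s_eq: "(real D - 1) * c = s" .
  note pos = matching_poly_pos_beyond_bound[OF sg deg \<open>D \<ge> 2\<close> \<open>\<forall>e\<in>E. q e \<le> c * s\<close> \<open>c > 0\<close> s_eq]
  assume "\<not> ?thesis"
  then consider "t > 2 * s" | "- t > 2 * s" by (simp add: s_def) linarith
  then show False
  proof cases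
    case 1
    then show False using pos[OF 1 order_refl] root by simp
  next
    case 2
    have "finite V" using sg by (simp add: simple_graph_def)
    then have "matching_poly E q V (- t) = 0" by (simp add: matching_poly_uminus[OF sg] root)
    then show False using pos[OF 2 order_refl] by simp
  qed
qed

lemma edges_nonempty_if_max_degree_pos:
  assumes "finite V" "V \<noteq> {}" "max_degree V E > 0"
  shows "E \<noteq> {}"
proof -
  have "max_degree V E \<in> degree E ` V"
    unfolding max_degree_def using assms(1,2) by (intro Max_in) auto
  then obtain v where "degree E v > 0" using assms(3) by auto
  then have "{e \<in> E. v \<in> e} \<noteq> {}" unfolding degree_def by (metis card.empty less_irrefl)
  then show ?thesis by blast
qed

theorem corollary3p5:
  fixes V :: "'a set" and E :: "'a set set" and w :: "'a set \<Rightarrow> complex"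
    and w1 :: "'a \<Rightarrow> complex"
  assumes "simple_graph V E"
    and "\<forall>e\<in>E. w e \<noteq> 0"
    and "\<forall>u\<in>V. w1 u = 0"
    and "max_degree V E > 1"
  shows "\<forall>x::complex. eta V E w w1 x = 0 \<longrightarrow>
           x \<in> \<real> \<and>
           \<bar>Re x\<bar> \<le> 2 * Max ((\<lambda>e. cmod (w e)) ` E) * sqrt (real (max_degree V E) - 1)"
proof (intro allI impI)
  fix x :: complex
  assume "eta V E w w1 x = 0"
  define q where "q = (\<lambda>e. (cmod (w e))\<^sup>2)"
  define b where "b = Max ((\<lambda>e. cmod (w e)) ` E)"
  have fin: "finite V" "finite E" using assms(1) simple_graph_finite_edges by (auto simp: simple_graph_def)
  have root: "matching_poly E q V x = 0"
    using \<open>eta V E w w1 x = 0\<close> eta_eq_matching_poly[OF assms(1,3)] by (simp add: q_def)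
  then have "V \<noteq> {}" using matching_poly_empty[OF assms(1), of q x] by auto
  have real: "x \<in> \<real>" using matching_poly_root_real[OF assms(1) _ order_refl root] by (simp add: q_def)
  then obtain t where t: "x = of_real t" using Reals_cases by blast
  have deg: "\<forall>v\<in>V. degree E v \<le> max_degree V E" using fin by (simp add: max_degree_def)
  have "E \<noteq> {}" using edges_nonempty_if_max_degree_pos[OF fin(1) \<open>V \<noteq> {}\<close>] assms(4) by simp
  then obtain e where "e \<in> E" by blast
  then have "0 < cmod (w e)" "cmod (w e) \<le> b" using assms(2) fin by (auto simp: b_def)
  then have "b > 0" by linarith
  have "\<forall>e\<in>E. q e \<le> b\<^sup>2" using fin by (auto simp: q_def b_def intro: power_mono)
  moreover have "matching_poly E q V t = 0" using root by (simp add: t matching_poly_of_real)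
  ultimately have "\<bar>t\<bar> \<le> 2 * b * sqrt (real (max_degree V E) - 1)"
    using matching_poly_real_root_bound[OF assms(1) deg _ _ \<open>b > 0\<close>] assms(4) by simp
  with real show "x \<in> \<real> \<and> \<bar>Re x\<bar> \<le> 2 * b * sqrt (real (max_degree V E) - 1)"
    by (simp add: t)
qed

end
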